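(* Let $n\in\mathbb{Z}^+$, $p\geq 1$ and $t\in(1,2]$. Then $$\Gamma_{t^n}(K_n^{p*})\leq \Big(\frac{n}{n+k(n,t)}\Big)^{1/p}\leq \Big(\frac{n}{n+\lfloor a(t)n\rfloor}\Big)^{1/p},$$ $$\Gamma_{t^n}(K_n^{p})\leq \Big(\frac{n}{n+l(n,t)}\Big)^{1/p}\leq \Big(\frac{n}{n+\lfloor b(t)n\rfloor}\Big)^{1/p}.$$
   Context: For a compact convex set $K\subseteq\mathbb{R}^n$ and $m\in\mathbb{Z}^+$, the covering functional is $\Gamma_m(K)=\inf\{\gamma>0:\exists C\subseteq\mathbb{R}^n,\ |C|=m,\ K\subseteq C+\gamma K\}$; for a real number $x\geq1$, $\Gamma_x(K)$ means $\Gamma_{\lfloor x\rfloor}(K)$. $K_n^p=\{(x_1,\dots,x_n)\in\mathbb{R}^n:\sum_{i=1}^n|x_i|^p\leq1\}$ and $K_n^{p*}=\{(x_1,\dots,x_n)\in\mathbb{R}^n:\sum_{i=1}^n x_i^p\leq1,\ x_i\geq0\ \forall i\}$. Let $f(x)=\frac{(1+x)^{1+x}}{x^x}$, $g(x)=\frac{2^x(1+x)^{1+x}}{x^x}$ on $(0,\infty)$ (strictly increasing, tending to $1$ as $x\to0^+$); for $t>1$, $a(t)$ and $b(t)$ are the solutions of $f(x)=t$ and $g(x)=t$. For $t\in(1,2]$, $k(n,t)$ is the nonnegative integer with $\binom{n+k(n,t)}{n}\leq t^n<\binom{n+k(n,t)+1}{n}$ and $l(n,t)$ is the nonnegative integer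 with $2^{l(n,t)}\binom{n+l(n,t)}{n}\leq t^n<2^{l(n,t)+1}\binom{n+l(n,t)+1}{n}$. *)

theory Defs
  imports "HOL-Analysis.Analysis"
begin

definition covering_functional :: "nat \<Rightarrow> (real^'n) set \<Rightarrow> real" where
  "covering_functional m K =
     Inf {\<gamma>::real. \<gamma> > 0 \<and> (\<exists>C. finite C \<and> card C = m \<and>
            K \<subseteq> {c + \<gamma> *\<^sub>R x | c x. c \<in> C \<and> x \<in> K})}"

definition covering_functional_real :: "real \<Rightarrow> (real^'n) set \<Rightarrow> real" where
  "covering_functional_real x K = covering_functional (nat \<lfloor>x\<rfloor>) K"

definition lp_ball :: "real \<Rightarrow> (real^'n) set" where
  "lp_ball p = {x. (\<Sum>i\<in>UNIV. \<bar>x $ i\<bar> powr p) \<le> 1}"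

definition lp_simplex :: "real \<Rightarrow> (real^'n) set" where
  "lp_simplex p = {x. (\<Sum>i\<in>UNIV. (x $ i) powr p) \<le> 1 \<and> (\<forall>i. x $ i \<ge> 0)}"

definition ff :: "real \<Rightarrow> real" where
  "ff x = (1 + x) powr (1 + x) / x powr x"

definition gg :: "real \<Rightarrow> real" where
  "gg x = 2 powr x * (1 + x) powr (1 + x) / x powr x"

definition a_fun :: "real \<Rightarrow> real" where
  "a_fun t = (THE x. x > 0 \<and> ff x = t)"

definition b_fun :: "real \<Rightarrow> real" where
  "b_fun t = (THE x. x > 0 \<and> gg x = t)"

definition k_fun :: "nat \<Rightarrow> real \<Rightarrow> nat" where
  "k_fun n t = (THE k. real ((n + k) choose n) \<le> t ^ n \<and> t ^ n < real ((n + k + 1) choose n))"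

definition l_fun :: "nat \<Rightarrow> real \<Rightarrow> nat" where
  "l_fun n t = (THE l. 2 ^ l * real ((n + l) choose n) \<le> t ^ n \<and>
                       t ^ n < 2 ^ (l + 1) * real ((n + l + 1) choose n))"

end

theory Submission
  imports Defs "HOL-Real_Asymp.Real_Asymp"
begin

text \<open>Write \<open>N = n + k\<close>. For \<open>x \<in> K_n^{p*}\<close> the vector \<open>(N x_i^p)_i\<close> has coordinate sum at
  most \<open>N\<close>; rounding it down to a nonnegative integer vector \<open>w\<close> with \<open>\<Sum> w_i \<le> k\<close> loses at
  most \<open>n\<close> in total. Among the at most \<open>binom(n+k, n)\<close> lattice centres
  \<open>c_w = ((w_i/N)^(1/p))_i\<close> we have \<open>c_w \<le> x\<close> coordinatewise, and superadditivity of
  \<open>s \<mapsto> s^p\<close> gives \<open>\<Sum> (x_i - c_w,i)^p \<le> \<Sum> (x_i^p - w_i/N) \<le> n/N\<close>, i.e.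
  \<open>x \<in> c_w + (n/N)^(1/p) K_n^{p*}\<close>. Reflecting each centre in the coordinate hyperplanes of its
  at most \<open>k\<close> nonzero coordinates covers \<open>K_n^p\<close> by \<open>2^k binom(n+k, n)\<close> translates.
  The bounds in terms of \<open>a(t)\<close> and \<open>b(t)\<close> come from the entropy estimate
  \<open>binom(n+m, n) \<le> f(m/n)^n\<close>, applied with \<open>m = \<lfloor>a(t) n\<rfloor>\<close>, and its twin
  \<open>2^m binom(n+m, n) \<le> g(m/n)^n\<close>.\<close>

definition lattice_simplex :: "'a set \<Rightarrow> nat \<Rightarrow> ('a \<Rightarrow> nat) set" where
  "lattice_simplex I k = {w. (\<forall>i. i \<notin> I \<longrightarrow> w i = 0) \<and> sum w I \<le> k}"

lemma finite_card_lattice_simplex: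
  assumes "finite I"
  shows "finite (lattice_simplex I k) \<and> card (lattice_simplex I k) \<le> (card I + k) choose card I"
  using assms
proof (induction I arbitrary: k rule: finite_induct)
  case empty
  have empty: "lattice_simplex {} k = {\<lambda>_. 0}" by (auto simp: lattice_simplex_def)
  show ?case unfolding empty by simp
next
  case (insert j I)
  let ?S = "Sigma {0..k} (\<lambda>v. lattice_simplex I (k - v))"
  have sub: "lattice_simplex (insert j I) k \<subseteq> (\<lambda>(v, w). w(j := v)) ` ?S"
  proof
    fix w assume w: "w \<in> lattice_simplex (insert j I) k"
    have "sum (w(j := 0)) I = sum w I" using insert by (intro sum.cong) auto
    with w insert have "w(j := 0) \<in> lattice_simplex I (k - w j)" "w j \<in> {0..k}"
      by (auto simp: lattice_simplex_def)
    then show "w \<in> (\<lambda>(v, w). w(j := v)) ` ?S"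
      by (intro image_eqI[of _ _ "(w j, w(j := 0))"]) auto
  qed
  have fin: "finite ?S" using insert by auto
  have "card (lattice_simplex (insert j I) k) \<le> card ?S"
    using card_mono[OF finite_imageI[OF fin] sub] card_image_le[OF fin] by (rule order_trans)
  also have "card ?S = (\<Sum>v=0..k. card (lattice_simplex I (k - v)))"
    using insert by simp
  also have "\<dots> \<le> (\<Sum>v=0..k. (card I + (k - v)) choose card I)"
    by (intro sum_mono) (use insert.IH in blast)
  also have "\<dots> = (\<Sum>u\<le>k. (card I + u) choose u)"
    by (subst sum.atLeastAtMost_rev) (simp add: atLeast0AtMost binomial_symmetric[of "card I"])
  also have "\<dots> = (card (insert j I) + k) choose card (insert j I)"
    using insert by (simp add: sum_choose_lower binomial_symmetric[of k "Suc (card I + k)"])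
  finally show ?case using finite_subset[OF sub finite_imageI[OF fin]] by simp
qed

lemma exists_nat_fun_le_sum_eq:
  fixes v :: "'a \<Rightarrow> nat"
  assumes "finite I" "k \<le> sum v I"
  shows "\<exists>w. (\<forall>i. w i \<le> v i) \<and> sum w I = k"
  using assms
proof (induction I arbitrary: k rule: finite_induct)
  case empty
  then show ?case by (intro exI[of _ "\<lambda>_. 0"]) auto
next
  case (insert j I)
  show ?case
  proof (cases "k \<le> sum v I")
    case True
    then obtain w where w: "\<forall>i. w i \<le> v i" "sum w I = k" using insert.IH by blast
    have "sum (w(j := 0)) I = sum w I" using insert by (intro sum.cong) auto
    with w insert show ?thesis by (intro exI[of _ "w(j := 0)"]) auto
  next
    case False
    have "sum (v(j := k - sum v I)) I = sum v I" using insert by (intro sum.cong) auto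
    with False insert show ?thesis by (intro exI[of _ "v(j := k - sum v I)"]) auto
  qed
qed

lemma round_down_into_lattice_simplex:
  fixes y :: "'n::finite \<Rightarrow> real"
  assumes nonneg: "\<And>i. y i \<ge> 0" and sum_le: "sum y UNIV \<le> real (CARD('n) + k)"
  shows "\<exists>w \<in> lattice_simplex UNIV k. (\<forall>i. real (w i) \<le> y i)
           \<and> (\<Sum>i\<in>UNIV. y i - real (w i)) \<le> real CARD('n)"
proof -
  define v where "v i = nat \<lfloor>y i\<rfloor>" for i
  have v_le: "real (v i) \<le> y i" for i using nonneg[of i] by (simp add: v_def)
  show ?thesis
  proof (cases "sum v UNIV \<le> k")
    case True
    have "y i - real (v i) \<le> 1" for i using nonneg[of i] by (simp add: v_def) linarith
    then have "(\<Sum>i\<in>UNIV. y i - real (v i)) \<le> (\<Sum>i\<in>(UNIV::'n set). 1)"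
      by (intro sum_mono)
    with True v_le show ?thesis by (intro bexI[of _ v]) (auto simp: lattice_simplex_def)
  next
    case False
    then obtain w where w: "\<forall>i. w i \<le> v i" "sum w UNIV = k"
      using exists_nat_fun_le_sum_eq[of UNIV k v] by auto
    have "real (w i) \<le> y i" for i using w(1) v_le[of i] by (meson of_nat_le_iff order_trans)
    moreover have "(\<Sum>i\<in>UNIV. y i - real (w i)) \<le> real CARD('n)"
      using sum_le w(2) by (simp add: sum_subtractf flip: of_nat_sum)
    ultimately show ?thesis using w(2) by (intro bexI[of _ w]) (auto simp: lattice_simplex_def)
  qed
qed

lemma add_powr_le_powr_add:
  fixes a b p :: real
  assumes "a \<ge> 0" "b \<ge> 0" "p \<ge> 1"
  shows "a powr p + b powr p \<le> (a + b) powr p"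
proof (cases "a + b = 0")
  case True
  then have "a = 0" "b = 0" using assms by auto
  then show ?thesis by simp
next
  case False
  then have s: "a + b > 0" using assms by auto
  have le_self: "(x / (a + b)) powr p \<le> x / (a + b)" if "0 \<le> x" "x \<le> a + b" for x
    using that s assms(3) powr_le_one_le[of "x / (a + b)" p] by (cases "x = 0") auto
  have "a powr p + b powr p = (a + b) powr p * ((a / (a + b)) powr p + (b / (a + b)) powr p)"
    using assms s by (simp add: powr_divide distrib_left)
  also have "\<dots> \<le> (a + b) powr p * (a / (a + b) + b / (a + b))"
    using assms by (intro mult_left_mono add_mono le_self) auto
  also have "\<dots> = (a + b) powr p" using s by (simp add: add_divide_distrib[symmetric])
  finally show ?thesis .
qed

definition lattice_centre :: "real \<Rightarrow> nat \<Rightarrow> ('n::finite \<Rightarrow> nat) \<Rightarrow> real^'n" where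
  "lattice_centre p k w = (\<chi> i. (w i / real (CARD('n) + k)) powr (1 / p))"

lemma lp_simplex_lattice_approx:
  fixes x :: "real^'n::finite" and k :: nat
  assumes p: "p \<ge> 1" and x: "x \<in> lp_simplex p"
  defines "N \<equiv> real (CARD('n) + k)"
  shows "\<exists>w \<in> lattice_simplex UNIV k. (\<forall>i. lattice_centre p k w $ i \<le> x $ i)
           \<and> (\<Sum>i\<in>UNIV. (x $ i - lattice_centre p k w $ i) powr p) \<le> real CARD('n) / N"
proof -
  have N: "N > 0" unfolding N_def by (simp add: add_pos_nonneg)
  have x_nonneg: "x $ i \<ge> 0" and x_sum: "(\<Sum>i\<in>UNIV. x $ i powr p) \<le> 1" for i
    using x by (auto simp: lp_simplex_def)
  define y where "y i = N * x $ i powr p" for i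
  have "\<And>i. y i \<ge> 0" and "sum y UNIV \<le> real (CARD('n) + k)"
    using N x_sum by (simp_all add: y_def N_def flip: sum_distrib_left)
  then obtain w where w: "w \<in> lattice_simplex UNIV k" "\<forall>i. real (w i) \<le> y i"
    and w_sum: "(\<Sum>i\<in>UNIV. y i - real (w i)) \<le> real CARD('n)"
    using round_down_into_lattice_simplex by blast
  define c where "c = lattice_centre p k w"
  have c_i: "c $ i = (w i / N) powr (1 / p)" for i by (simp add: c_def lattice_centre_def N_def)
  have c_pow: "c $ i powr p = w i / N" for i using p N by (simp add: c_i powr_powr)
  have c_le: "c $ i \<le> x $ i" for i
  proof -
    have "w i / N \<le> x $ i powr p" using w(2) N by (simp add: y_def field_simps)
    then have "c $ i \<le> (x $ i powr p) powr (1 / p)" unfolding c_i using p N by (intro powr_mono2) auto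
    also have "\<dots> = x $ i" using p x_nonneg[of i] by (simp add: powr_powr)
    finally show ?thesis .
  qed
  have "(x $ i - c $ i) powr p \<le> x $ i powr p - w i / N" for i
    using add_powr_le_powr_add[of "x $ i - c $ i" "c $ i" p] c_le[of i] c_pow[of i] p
    by (simp add: c_i)
  then have "(\<Sum>i\<in>UNIV. (x $ i - c $ i) powr p) \<le> (\<Sum>i\<in>UNIV. y i - real (w i)) / N"
    using N by (simp add: y_def sum_divide_distrib diff_divide_distrib sum_mono)
  also have "\<dots> \<le> real CARD('n) / N" using w_sum N by (simp add: divide_right_mono)
  finally show ?thesis using w(1) c_le unfolding c_def by blast
qed

lemma lp_simplex_subset_lattice_centres:
  fixes p :: real and k :: nat
  assumes p: "p \<ge> 1"
  defines "\<gamma> \<equiv> (real CARD('n::finite) / real (CARD('n) + k)) powr (1 / p)"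
  shows "(lp_simplex p :: (real^'n) set)
           \<subseteq> {c + \<gamma> *\<^sub>R u | c u. c \<in> lattice_centre p k ` lattice_simplex UNIV k \<and> u \<in> lp_simplex p}"
proof
  fix x :: "real^'n" assume "x \<in> lp_simplex p"
  then obtain w where w: "w \<in> lattice_simplex UNIV k"
    and le: "\<forall>i. lattice_centre p k w $ i \<le> x $ i"
    and small: "(\<Sum>i\<in>UNIV. (x $ i - lattice_centre p k w $ i) powr p)
                  \<le> real CARD('n) / real (CARD('n) + k)"
    using lp_simplex_lattice_approx[OF p] by blast
  have ratio: "real CARD('n) / real (CARD('n) + k) > 0" by (simp add: add_pos_nonneg)
  have \<gamma>: "\<gamma> > 0" "\<gamma> powr p = real CARD('n) / real (CARD('n) + k)"
    unfolding \<gamma>_def using ratio p by (simp_all only: powr_gt_zero powr_powr) simp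
  define c where "c = lattice_centre p k w"
  define u where "u = (1 / \<gamma>) *\<^sub>R (x - c)"
  have u_i: "u $ i = (x $ i - c $ i) / \<gamma>" for i by (simp add: u_def)
  have "x = c + \<gamma> *\<^sub>R u" using \<gamma> by (simp add: u_def)
  moreover have "u \<in> lp_simplex p"
  proof -
    have "(\<Sum>i\<in>UNIV. u $ i powr p) = (\<Sum>i\<in>UNIV. (x $ i - c $ i) powr p) / \<gamma> powr p"
      using le \<gamma>(1) by (simp add: u_i powr_divide sum_divide_distrib c_def)
    also have "\<dots> \<le> 1"
      unfolding \<gamma>(2) c_def by (subst divide_le_eq_1_pos[OF ratio]) (rule small)
    finally show ?thesis using le \<gamma> by (simp add: lp_simplex_def u_i c_def)
  qed
  ultimately show "x \<in> {c + \<gamma> *\<^sub>R u | c u. c \<in> lattice_centre p k ` lattice_simplex UNIV k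
                          \<and> u \<in> lp_simplex p}"
    using w unfolding c_def by blast
qed

lemma finite_card_lattice_centres:
  "finite (lattice_centre p k ` lattice_simplex (UNIV::'n::finite set) k)
   \<and> card (lattice_centre p k ` lattice_simplex (UNIV::'n set) k) \<le> (CARD('n) + k) choose CARD('n)"
  using finite_card_lattice_simplex[of "UNIV::'n set" k] card_image_le by (auto intro: order_trans)

lemma card_support_lattice_centre_le:
  assumes "w \<in> lattice_simplex UNIV k"
  shows "card {i. lattice_centre p k w $ i \<noteq> 0} \<le> k"
proof -
  have "card {i. lattice_centre p k w $ i \<noteq> 0} \<le> card {i. w i \<noteq> 0}"
    by (intro card_mono) (auto simp: lattice_centre_def)
  also have "\<dots> = (\<Sum>i | w i \<noteq> 0. 1)" by simp
  also have "\<dots> \<le> (\<Sum>i | w i \<noteq> 0. w i)" by (intro sum_mono) auto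
  also have "\<dots> \<le> sum w UNIV" by (intro sum_mono2) auto
  also have "\<dots> \<le> k" using assms by (simp add: lattice_simplex_def)
  finally show ?thesis .
qed

definition sign_flip :: "'n set \<Rightarrow> real^'n \<Rightarrow> real^'n" where
  "sign_flip S c = (\<chi> i. if i \<in> S then - c $ i else c $ i)"

text \<open>Flipping a zero coordinate changes nothing, so only the support of a centre is flipped;
  this keeps the number of reflections of a lattice centre at most \<open>2^k\<close>.\<close>

definition reflections :: "(real^'n) set \<Rightarrow> (real^'n) set" where
  "reflections C = (\<Union>c\<in>C. (\<lambda>S. sign_flip S c) ` Pow {i. c $ i \<noteq> 0})"

lemma finite_card_reflections:
  fixes C :: "(real^'n::finite) set"
  assumes fin: "finite C" and support: "\<And>c. c \<in> C \<Longrightarrow> card {i. c $ i \<noteq> 0} \<le> k"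
  shows "finite (reflections C) \<and> card (reflections C) \<le> 2 ^ k * card C"
proof -
  have "card (reflections C) \<le> (\<Sum>c\<in>C. card ((\<lambda>S. sign_flip S c) ` Pow {i. c $ i \<noteq> 0}))"
    unfolding reflections_def using fin by (rule card_UN_le)
  also have "\<dots> \<le> (\<Sum>c\<in>C. 2 ^ k)"
  proof (rule sum_mono)
    fix c assume "c \<in> C"
    have "card ((\<lambda>S. sign_flip S c) ` Pow {i. c $ i \<noteq> 0}) \<le> 2 ^ card {i. c $ i \<noteq> 0}"
      using card_image_le[of "Pow {i. c $ i \<noteq> 0}"] by (simp add: card_Pow)
    also have "\<dots> \<le> 2 ^ k" using support[OF \<open>c \<in> C\<close>] by (simp add: power_increasing)
    finally show "card ((\<lambda>S. sign_flip S c) ` Pow {i. c $ i \<noteq> 0}) \<le> 2 ^ k" .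
  qed
  finally show ?thesis using fin by (simp add: reflections_def mult.commute)
qed

lemma lp_ball_subset_reflections:
  fixes C :: "(real^'n::finite) set"
  assumes cover: "lp_simplex p \<subseteq> {c + \<gamma> *\<^sub>R u | c u. c \<in> C \<and> u \<in> lp_simplex p}"
  shows "lp_ball p \<subseteq> {c + \<gamma> *\<^sub>R u | c u. c \<in> reflections C \<and> u \<in> lp_ball p}"
proof
  fix x :: "real^'n" assume x: "x \<in> lp_ball p"
  define S where "S = {i. x $ i < 0}"
  have "(\<chi> i. \<bar>x $ i\<bar>) \<in> lp_simplex p" using x by (simp add: lp_ball_def lp_simplex_def)
  then obtain c u where cu: "(\<chi> i. \<bar>x $ i\<bar>) = c + \<gamma> *\<^sub>R u" "c \<in> C" "u \<in> lp_simplex p"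
    using cover by blast
  have "x = sign_flip S (\<chi> i. \<bar>x $ i\<bar>)" by (simp add: sign_flip_def S_def vec_eq_iff)
  also have "\<dots> = sign_flip S c + \<gamma> *\<^sub>R sign_flip S u" by (simp add: cu(1) sign_flip_def vec_eq_iff)
  finally have "x = sign_flip (S \<inter> {i. c $ i \<noteq> 0}) c + \<gamma> *\<^sub>R sign_flip S u"
    by (simp add: sign_flip_def vec_eq_iff)
  moreover have "sign_flip (S \<inter> {i. c $ i \<noteq> 0}) c \<in> reflections C"
    using cu(2) by (auto simp: reflections_def)
  moreover have "sign_flip S u \<in> lp_ball p"
  proof -
    have "\<bar>sign_flip S u $ i\<bar> = u $ i" for i using cu(3) by (auto simp: lp_simplex_def sign_flip_def)
    then show ?thesis using cu(3) by (simp add: lp_ball_def lp_simplex_def)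
  qed
  ultimately show "x \<in> {c + \<gamma> *\<^sub>R u | c u. c \<in> reflections C \<and> u \<in> lp_ball p}" by blast
qed

lemma covering_functional_le:
  fixes K C :: "(real^'n::finite) set"
  assumes "\<gamma> > 0" and "finite C" and "card C \<le> m"
    and cover: "K \<subseteq> {c + \<gamma> *\<^sub>R x | c x. c \<in> C \<and> x \<in> K}"
  shows "covering_functional m K \<le> \<gamma>"
proof -
  \<comment> \<open>The definition asks for exactly \<open>m\<close> centres, so \<open>C\<close> is padded with unused points.\<close>
  have "infinite (UNIV - C)"
    using infinite_UNIV_vec[OF infinite_UNIV_char_0] \<open>finite C\<close> by (rule Diff_infinite_finite[rotated])
  then obtain D where D: "finite D" "card D = m - card C" "D \<subseteq> UNIV - C"
    using infinite_arbitrarily_large by blast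
  have "card (C \<union> D) = m"
    using D \<open>finite C\<close> \<open>card C \<le> m\<close> by (subst card_Un_disjoint) auto
  moreover have "K \<subseteq> {c + \<gamma> *\<^sub>R x | c x. c \<in> C \<union> D \<and> x \<in> K}" using cover by blast
  ultimately have "\<gamma> \<in> {\<gamma>. \<gamma> > 0 \<and> (\<exists>C. finite C \<and> card C = m \<and>
                     K \<subseteq> {c + \<gamma> *\<^sub>R x | c x. c \<in> C \<and> x \<in> K})}"
    using \<open>\<gamma> > 0\<close> \<open>finite C\<close> D(1) by blast
  then show ?thesis
    unfolding covering_functional_def by (rule cInf_lower) (auto intro: bdd_belowI[of _ 0])
qed

lemma covering_functional_real_lp_simplex_le:
  fixes p x :: real and k :: nat
  assumes p: "p \<ge> 1" and x: "real ((CARD('n::finite) + k) choose CARD('n)) \<le> x"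
  shows "covering_functional_real x (lp_simplex p :: (real^'n) set)
           \<le> (real CARD('n) / real (CARD('n) + k)) powr (1 / p)"
proof -
  let ?C = "lattice_centre p k ` lattice_simplex (UNIV::'n set) k"
  have fin: "finite ?C" and card: "card ?C \<le> nat \<lfloor>x\<rfloor>"
    using finite_card_lattice_centres[of p k, where 'n='n] le_nat_floor[OF x] by (auto intro: order_trans)
  show ?thesis
    unfolding covering_functional_real_def
    by (rule covering_functional_le[OF _ fin card lp_simplex_subset_lattice_centres[OF p]])
      (simp del: of_nat_add)
qed

lemma covering_functional_real_lp_ball_le:
  fixes p x :: real and k :: nat
  assumes p: "p \<ge> 1" and x: "2 ^ k * real ((CARD('n::finite) + k) choose CARD('n)) \<le> x"
  shows "covering_functional_real x (lp_ball p :: (real^'n) set)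
           \<le> (real CARD('n) / real (CARD('n) + k)) powr (1 / p)"
proof -
  let ?C = "lattice_centre p k ` lattice_simplex (UNIV::'n set) k"
  have "finite ?C" and "card ?C \<le> (CARD('n) + k) choose CARD('n)"
    using finite_card_lattice_centres[of p k, where 'n='n] by simp_all
  moreover have "card {i. c $ i \<noteq> 0} \<le> k" if "c \<in> ?C" for c
    using that card_support_lattice_centre_le by blast
  ultimately have fin: "finite (reflections ?C)"
    and "card (reflections ?C) \<le> 2 ^ k * ((CARD('n) + k) choose CARD('n))"
    using finite_card_reflections[of ?C k] by (auto intro: order_trans)
  moreover have "real (2 ^ k * ((CARD('n) + k) choose CARD('n))) \<le> x" using x by simp
  ultimately have card: "card (reflections ?C) \<le> nat \<lfloor>x\<rfloor>"
    using le_nat_floor order_trans by blast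
  show ?thesis
    unfolding covering_functional_real_def
    by (rule covering_functional_le[OF _ fin card
          lp_ball_subset_reflections[OF lp_simplex_subset_lattice_centres[OF p]]])
      (simp del: of_nat_add)
qed

lemma mono_step_le_iff:
  fixes h :: "nat \<Rightarrow> 'a::linorder"
  assumes mono: "mono h" and "h k \<le> T" and "T < h (Suc k)"
  shows "h m \<le> T \<longleftrightarrow> m \<le> k"
proof
  assume "h m \<le> T"
  show "m \<le> k"
  proof (rule ccontr)
    assume "\<not> m \<le> k"
    then have "h (Suc k) \<le> h m" using mono by (simp add: monoD)
    with \<open>T < h (Suc k)\<close> \<open>h m \<le> T\<close> show False by simp
  qed
next
  assume "m \<le> k"
  then show "h m \<le> T" using mono \<open>h k \<le> T\<close> by (meson monoD order_trans)
qed

lemma The_mono_step_le_iff: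
  fixes h :: "nat \<Rightarrow> 'a::linorder"
  assumes mono: "mono h" and "h 0 \<le> T" and "T < h M"
  shows "h m \<le> T \<longleftrightarrow> m \<le> (THE k. h k \<le> T \<and> T < h (Suc k))"
proof -
  define j where "j = (LEAST j. T < h j)"
  have "T < h j" unfolding j_def using \<open>T < h M\<close> by (rule LeastI)
  moreover have "j \<noteq> 0" using calculation \<open>h 0 \<le> T\<close> by (metis leD)
  moreover have "h (j - 1) \<le> T"
    using not_less_Least[of "j - 1" "\<lambda>j. T < h j"] \<open>j \<noteq> 0\<close> unfolding j_def[symmetric] by simp
  ultimately have step: "h (j - 1) \<le> T \<and> T < h (Suc (j - 1))" by simp
  have "(THE k. h k \<le> T \<and> T < h (Suc k)) = j - 1"
  proof (rule the_equality)
    fix k assume "h k \<le> T \<and> T < h (Suc k)"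
    then show "k = j - 1"
      using mono_step_le_iff[OF mono, of k T] mono_step_le_iff[OF mono, of "j - 1" T] step
      by (meson le_antisym order_refl)
  qed (rule step)
  then show ?thesis using mono_step_le_iff[OF mono] step by simp
qed

lemma k_fun_le_iff:
  assumes "n > 0" and "1 \<le> t"
  shows "real ((n + m) choose n) \<le> t ^ n \<longleftrightarrow> m \<le> k_fun n t"
proof -
  define h where "h k = real ((n + k) choose n)" for k
  have mono: "mono h" unfolding h_def by (rule incseq_SucI) (simp add: binomial_right_mono)
  define M where "M = nat \<lceil>t ^ n\<rceil>"
  have "Suc M = Suc M choose M" by simp
  also have "\<dots> \<le> (n + M) choose M" using \<open>n > 0\<close> by (intro binomial_right_mono) simp
  also have "\<dots> = (n + M) choose n" using binomial_symmetric[of M "n + M"] by simp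
  finally have "real (Suc M) \<le> h M" unfolding h_def by linarith
  moreover have "t ^ n < real (Suc M)" unfolding M_def by linarith
  ultimately have "t ^ n < h M" by linarith
  moreover have "h 0 \<le> t ^ n" using \<open>1 \<le> t\<close> by (simp add: h_def)
  moreover have "(THE k. h k \<le> t ^ n \<and> t ^ n < h (Suc k)) = k_fun n t"
    by (simp add: k_fun_def h_def)
  ultimately have "h m \<le> t ^ n \<longleftrightarrow> m \<le> k_fun n t"
    using The_mono_step_le_iff[OF mono] by metis
  then show ?thesis by (simp only: h_def)
qed

lemma l_fun_le_iff:
  assumes "1 \<le> t"
  shows "2 ^ m * real ((n + m) choose n) \<le> t ^ n \<longleftrightarrow> m \<le> l_fun n t"
proof -
  define h where "h k = 2 ^ k * real ((n + k) choose n)" for k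
  have mono: "mono h"
  proof (rule incseq_SucI)
    fix k
    have "real ((n + k) choose n) \<le> real ((n + Suc k) choose n)" by (simp add: binomial_right_mono)
    then show "h k \<le> h (Suc k)" unfolding h_def by (intro mult_mono) auto
  qed
  define M where "M = nat \<lceil>t ^ n\<rceil>"
  have "t ^ n \<le> real M" unfolding M_def by linarith
  also have "real M < 2 ^ M" by (metis less_exp of_nat_less_iff of_nat_numeral of_nat_power)
  also have "(2::real) ^ M \<le> h M" by (simp add: h_def Suc_le_eq)
  finally have "t ^ n < h M" .
  moreover have "h 0 \<le> t ^ n" using \<open>1 \<le> t\<close> by (simp add: h_def)
  moreover have "(THE k. h k \<le> t ^ n \<and> t ^ n < h (Suc k)) = l_fun n t"
    by (simp add: l_fun_def h_def)
  ultimately have "h m \<le> t ^ n \<longleftrightarrow> m \<le> l_fun n t"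
    using The_mono_step_le_iff[OF mono] by metis
  then show ?thesis by (simp only: h_def)
qed

definition ln_ff :: "real \<Rightarrow> real" where
  "ln_ff x = (1 + x) * ln (1 + x) - x * ln x"

lemma ff_eq_exp_ln_ff: "x > 0 \<Longrightarrow> ff x = exp (ln_ff x)"
  by (simp add: ff_def ln_ff_def powr_def exp_diff mult.commute)

lemma gg_eq_powr_mult_ff: "gg x = 2 powr x * ff x"
  by (simp add: gg_def ff_def)

lemma strict_mono_on_ln_ff: "strict_mono_on {0<..} ln_ff"
proof (rule strict_mono_onI)
  fix x y :: real assume "x \<in> {0<..}" "y \<in> {0<..}" "x < y"
  show "ln_ff x < ln_ff y"
  proof (rule DERIV_pos_imp_increasing[OF \<open>x < y\<close>])
    fix z assume "x \<le> z"
    with \<open>x \<in> {0<..}\<close> have "z > 0" by simp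
    then have "(ln_ff has_real_derivative ln (1 + z) - ln z) (at z)"
      unfolding ln_ff_def by (auto intro!: derivative_eq_intros simp: field_simps)
    moreover have "ln (1 + z) - ln z > 0" using \<open>z > 0\<close> by simp
    ultimately show "\<exists>d. (ln_ff has_real_derivative d) (at z) \<and> d > 0" by blast
  qed
qed

lemma strict_mono_on_ff: "strict_mono_on {0<..} ff"
  using strict_mono_onD[OF strict_mono_on_ln_ff]
  by (intro strict_mono_onI) (simp add: ff_eq_exp_ln_ff)

lemma strict_mono_on_gg: "strict_mono_on {0<..} gg"
proof (rule strict_mono_onI)
  fix x y :: real assume xy: "x \<in> {0<..}" "y \<in> {0<..}" "x < y"
  have "ff x < ff y" using strict_mono_onD[OF strict_mono_on_ff xy] .
  moreover have "2 powr x \<le> 2 powr y" using xy by simp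
  moreover have "ff x > 0" using xy by (simp add: ff_eq_exp_ln_ff)
  ultimately show "gg x < gg y"
    unfolding gg_eq_powr_mult_ff by (intro mult_le_less_imp_less) auto
qed

lemma continuous_on_ff: "continuous_on {0<..} ff"
  unfolding ff_def by (intro continuous_intros) auto

lemma continuous_on_gg: "continuous_on {0<..} gg"
  unfolding gg_eq_powr_mult_ff by (intro continuous_intros continuous_on_ff) auto

lemma less_ff:
  assumes "x > 0"
  shows "x < ff x"
proof -
  have "ln x < ln (1 + x)" using assms by simp
  moreover have "ln_ff x = ln (1 + x) + x * (ln (1 + x) - ln x)"
    by (simp add: ln_ff_def algebra_simps)
  ultimately have "ln x < ln_ff x" using assms by (smt (verit) mult_pos_pos)
  then show ?thesis using assms by (metis exp_less_cancel_iff exp_ln ff_eq_exp_ln_ff)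
qed

lemma less_gg:
  assumes "x > 0"
  shows "x < gg x"
proof -
  have "ff x \<le> 2 powr x * ff x"
    using assms less_ff[OF assms] mult_right_mono[of 1 "2 powr x" "ff x"]
    by (simp add: ge_one_powr_ge_zero)
  then show ?thesis using less_ff[OF assms] by (simp add: gg_eq_powr_mult_ff)
qed

lemma ex1_pos_eq_if_strict_mono_on:
  fixes F :: "real \<Rightarrow> real"
  assumes mono: "strict_mono_on {0<..} F" and cont: "continuous_on {0<..} F"
    and lim: "(F \<longlongrightarrow> 1) (at_right 0)" and "1 < t" and "t < F t"
  shows "\<exists>!x. x > 0 \<and> F x = t"
proof -
  have "eventually (\<lambda>x. F x < t) (at_right 0)"
    using lim \<open>1 < t\<close> by (rule order_tendstoD(2))
  then obtain b where "b > 0" and below: "\<And>x. 0 < x \<Longrightarrow> x < b \<Longrightarrow> F x < t"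
    unfolding eventually_at_right_field by auto
  define e where "e = min b t / 2"
  have e: "0 < e" "e < b" "e \<le> t" using \<open>b > 0\<close> \<open>1 < t\<close> by (auto simp: e_def)
  have "continuous_on {e..t} F" using cont by (rule continuous_on_subset) (use e in auto)
  then obtain x where "e \<le> x" "F x = t"
    using IVT'[of F e t t] below[OF e(1,2)] \<open>t < F t\<close> e(3) by force
  then have x: "x > 0 \<and> F x = t" using e by simp
  moreover have "y = x" if "y > 0 \<and> F y = t" for y
    using strict_mono_on_eqD[OF mono, of x y] that x by simp
  ultimately show ?thesis by blast
qed

lemma a_fun_solves:
  assumes "1 < t"
  shows "a_fun t > 0 \<and> ff (a_fun t) = t"
proof -
  have "(ff \<longlongrightarrow> 1) (at_right 0)" unfolding ff_def by real_asymp
  then have "\<exists>!x. x > 0 \<and> ff x = t"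
    using strict_mono_on_ff continuous_on_ff assms less_ff[of t]
    by (intro ex1_pos_eq_if_strict_mono_on) auto
  then show ?thesis unfolding a_fun_def by (rule theI')
qed

lemma b_fun_solves:
  assumes "1 < t"
  shows "b_fun t > 0 \<and> gg (b_fun t) = t"
proof -
  have "(gg \<longlongrightarrow> 1) (at_right 0)" unfolding gg_def by real_asymp
  then have "\<exists>!x. x > 0 \<and> gg x = t"
    using strict_mono_on_gg continuous_on_gg assms less_gg[of t]
    by (intro ex1_pos_eq_if_strict_mono_on) auto
  then show ?thesis unfolding b_fun_def by (rule theI')
qed

lemma binomial_mult_powers_le: "((n + m) choose m) * m ^ m * n ^ n \<le> (n + m) ^ (n + m)"
proof -
  have "((n + m) choose m) * m ^ m * n ^ (n + m - m)
          \<le> (\<Sum>j\<le>n + m. ((n + m) choose j) * m ^ j * n ^ (n + m - j))"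
    by (rule member_le_sum) auto
  also have "\<dots> = (m + n) ^ (n + m)" by (simp add: binomial_ring)
  finally show ?thesis by (simp add: add.commute)
qed

lemma ff_power_eq:
  assumes "n > 0" and "m > 0"
  shows "ff (real m / real n) ^ n = real (n + m) ^ (n + m) / (real m ^ m * real n ^ n)"
proof -
  define x where "x = real m / real n"
  have x: "x > 0" "real n * (1 + x) = real (n + m)" "real n * x = real m"
    using assms by (auto simp: x_def field_simps)
  have "ff x ^ n = (1 + x) powr (real n * (1 + x)) / x powr (real n * x)"
    using x by (simp add: ff_def power_divide powr_power)
  also have "\<dots> = (1 + x) ^ (n + m) / x ^ m"
    using x by (simp add: powr_realpow flip: of_nat_add)
  also have "\<dots> = real (n + m) ^ (n + m) / (real m ^ m * real n ^ n)"
    using assms by (simp add: x_def field_simps power_divide power_add)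
  finally show ?thesis unfolding x_def .
qed

lemma binomial_le_ff_power:
  assumes "n > 0" and "m > 0"
  shows "real ((n + m) choose n) \<le> ff (real m / real n) ^ n"
proof -
  have "((n + m) choose n) * (m ^ m * n ^ n) \<le> (n + m) ^ (n + m)"
    using binomial_mult_powers_le[of n m] binomial_symmetric[of m "n + m"] by (simp add: mult.assoc)
  then have "real (((n + m) choose n) * (m ^ m * n ^ n)) \<le> real ((n + m) ^ (n + m))"
    by (simp only: of_nat_le_iff)
  then have "real ((n + m) choose n) * (real m ^ m * real n ^ n) \<le> real (n + m) ^ (n + m)"
    by simp
  then show ?thesis using assms by (simp add: ff_power_eq pos_le_divide_eq)
qed

lemma two_power_binomial_le_gg_power:
  assumes "n > 0" and "m > 0"
  shows "2 ^ m * real ((n + m) choose n) \<le> gg (real m / real n) ^ n"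
proof -
  have "(2 powr (real m / real n)) ^ n = (2::real) ^ m"
    using assms by (simp add: powr_power powr_realpow)
  then have "gg (real m / real n) ^ n = 2 ^ m * ff (real m / real n) ^ n"
    by (simp add: gg_eq_powr_mult_ff power_mult_distrib)
  then show ?thesis using binomial_le_ff_power[OF assms] by simp
qed

lemma floor_a_fun_le_k_fun:
  assumes "n > 0" and "1 < t"
  shows "nat \<lfloor>a_fun t * real n\<rfloor> \<le> k_fun n t"
proof -
  define m where "m = nat \<lfloor>a_fun t * real n\<rfloor>"
  have a: "a_fun t > 0" "ff (a_fun t) = t" using a_fun_solves[OF \<open>1 < t\<close>] by auto
  have "real ((n + m) choose n) \<le> t ^ n"
  proof (cases "m = 0")
    case True
    then show ?thesis using \<open>1 < t\<close> by simp
  next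
    case False
    then have pos: "real m / real n > 0" using \<open>n > 0\<close> by simp
    have "real m \<le> a_fun t * real n" using a by (simp add: m_def)
    then have "real m / real n \<le> a_fun t" using \<open>n > 0\<close> by (simp add: pos_divide_le_eq)
    then have "ff (real m / real n) \<le> t"
      using strict_mono_on_leD[OF strict_mono_on_ff, of "real m / real n" "a_fun t"] a pos by simp
    moreover have "0 \<le> ff (real m / real n)" using less_ff[OF pos] pos by linarith
    ultimately have "ff (real m / real n) ^ n \<le> t ^ n" by (rule power_mono)
    with binomial_le_ff_power[of n m] False \<open>n > 0\<close> show ?thesis by simp
  qed
  then show ?thesis using k_fun_le_iff[of n t m] assms by (simp add: m_def)
qed

lemma floor_b_fun_le_l_fun:
  assumes "n > 0" and "1 < t"
  shows "nat \<lfloor>b_fun t * real n\<rfloor> \<le> l_fun n t"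
proof -
  define m where "m = nat \<lfloor>b_fun t * real n\<rfloor>"
  have b: "b_fun t > 0" "gg (b_fun t) = t" using b_fun_solves[OF \<open>1 < t\<close>] by auto
  have "2 ^ m * real ((n + m) choose n) \<le> t ^ n"
  proof (cases "m = 0")
    case True
    then show ?thesis using \<open>1 < t\<close> by simp
  next
    case False
    then have pos: "real m / real n > 0" using \<open>n > 0\<close> by simp
    have "real m \<le> b_fun t * real n" using b by (simp add: m_def)
    then have "real m / real n \<le> b_fun t" using \<open>n > 0\<close> by (simp add: pos_divide_le_eq)
    then have "gg (real m / real n) \<le> t"
      using strict_mono_on_leD[OF strict_mono_on_gg, of "real m / real n" "b_fun t"] b pos by simp
    moreover have "0 \<le> gg (real m / real n)" using less_gg[OF pos] pos by linarith
    ultimately have "gg (real m / real n) ^ n \<le> t ^ n" by (rule power_mono)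
    with two_power_binomial_le_gg_power[of n m] False \<open>n > 0\<close> show ?thesis by simp
  qed
  then show ?thesis using l_fun_le_iff[of t m n] assms by (simp add: m_def)
qed

lemma ratio_powr_antimono:
  fixes n m k :: nat and p :: real
  assumes "n > 0" and "p > 0" and "m \<le> k"
  shows "(real n / real (n + k)) powr (1 / p) \<le> (real n / (real n + real m)) powr (1 / p)"
  using assms by (intro powr_mono2 divide_left_mono) auto

theorem proposition3p3:
  fixes p t :: real
  defines "n \<equiv> CARD('n::finite)"
  assumes "p \<ge> 1" and "1 < t" and "t \<le> 2"
  shows "covering_functional_real (t ^ n) (lp_simplex p :: (real^'n) set)
           \<le> (real n / real (n + k_fun n t)) powr (1 / p)
       \<and> (real n / real (n + k_fun n t)) powr (1 / p)
           \<le> (real n / (real n + of_int \<lfloor>a_fun t * real n\<rfloor>)) powr (1 / p)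
       \<and> covering_functional_real (t ^ n) (lp_ball p :: (real^'n) set)
           \<le> (real n / real (n + l_fun n t)) powr (1 / p)
       \<and> (real n / real (n + l_fun n t)) powr (1 / p)
           \<le> (real n / (real n + of_int \<lfloor>b_fun t * real n\<rfloor>)) powr (1 / p)"
proof -
  note p = \<open>p \<ge> 1\<close> and t = \<open>1 < t\<close>
  have n: "n > 0" unfolding n_def by simp
  have "real ((n + k_fun n t) choose n) \<le> t ^ n"
    using k_fun_le_iff[OF n] t by simp
  then have simplex: "covering_functional_real (t ^ n) (lp_simplex p :: (real^'n) set)
                        \<le> (real n / real (n + k_fun n t)) powr (1 / p)"
    unfolding n_def by (rule covering_functional_real_lp_simplex_le[OF p])
  have "2 ^ l_fun n t * real ((n + l_fun n t) choose n) \<le> t ^ n"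
    using l_fun_le_iff t by simp
  then have ball: "covering_functional_real (t ^ n) (lp_ball p :: (real^'n) set)
                     \<le> (real n / real (n + l_fun n t)) powr (1 / p)"
    unfolding n_def by (rule covering_functional_real_lp_ball_le[OF p])
  have "of_int \<lfloor>a_fun t * real n\<rfloor> = real (nat \<lfloor>a_fun t * real n\<rfloor>)"
    using a_fun_solves[OF t] by simp
  then have a_bound: "(real n / real (n + k_fun n t)) powr (1 / p)
                        \<le> (real n / (real n + of_int \<lfloor>a_fun t * real n\<rfloor>)) powr (1 / p)"
    using p by (simp only:) (rule ratio_powr_antimono[OF n _ floor_a_fun_le_k_fun[OF n t]], simp)
  have "of_int \<lfloor>b_fun t * real n\<rfloor> = real (nat \<lfloor>b_fun t * real n\<rfloor>)"
    using b_fun_solves[OF t] by simp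
  then have b_bound: "(real n / real (n + l_fun n t)) powr (1 / p)
                        \<le> (real n / (real n + of_int \<lfloor>b_fun t * real n\<rfloor>)) powr (1 / p)"
    using p by (simp only:) (rule ratio_powr_antimono[OF n _ floor_b_fun_le_l_fun[OF n t]], simp)
  show ?thesis using simplex a_bound ball b_bound by blast
qed

end
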